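(* Let $p\in[1,\infty]$ and $m,n\in\mathbb N$, and let $$\mathbb H^n_G(m):=\Big\{\frac{\boldsymbol w}{\|\boldsymbol w\|_p}:\boldsymbol w\ne\boldsymbol0,\ w_i\in\{0,\pm\tfrac1m,\pm\tfrac2m,\dots,\pm1\},\ i=1,\dots,n\Big\}.$$ Then $|\mathbb H^n_G(m)|\le(2m+1)^n$, and for any $\boldsymbol x\in\mathbb S^n_p$ there exists $\boldsymbol y\in\mathbb H^n_G(m)$ such that for every $\boldsymbol z\in\mathbb R^n$: if $\boldsymbol y^{\mathrm T}\boldsymbol z\ge0$ then $\boldsymbol y^{\mathrm T}\boldsymbol z-\frac{\|\boldsymbol z\|_1}m\le\boldsymbol x^{\mathrm T}\boldsymbol z\le(1+\frac{n^{1/p}}m)\boldsymbol y^{\mathrm T}\boldsymbol z+\frac{\|\boldsymbol z\|_1}m$; if $\boldsymbol y^{\mathrm T}\boldsymbol z<0$ then $(1+\frac{n^{1/p}}m)\boldsymbol y^{\mathrm T}\boldsymbol z-\frac{\|\boldsymbol z\|_1}m\le\boldsymbol x^{\mathrm T}\boldsymbol z\le\boldsymbol y^{\mathrm T}\boldsymbol z+\frac{\|\boldsymbol z\|_1}m$.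
   Context: $\mathbb S^n_p=\{\boldsymbol x\in\mathbb R^n:\|\boldsymbol x\|_p=1\}$. *)

theory Defs
  imports "HOL-Analysis.Analysis" "HOL-Library.Extended_Real"
begin

definition pnorm :: "ereal \<Rightarrow> real ^ 'n \<Rightarrow> real" where
  "pnorm p x = (if p = \<infinity> then Max (range (\<lambda>i. \<bar>x $ i\<bar>))
               else (\<Sum>i\<in>UNIV. \<bar>x $ i\<bar> powr real_of_ereal p) powr (1 / real_of_ereal p))"

definition norm1 :: "real ^ 'n \<Rightarrow> real" where
  "norm1 z = (\<Sum>i\<in>UNIV. \<bar>z $ i\<bar>)"

text \<open>n^(1/p), with the convention 1/infinity = 0.\<close>
definition root_p :: "ereal \<Rightarrow> nat \<Rightarrow> real" where
  "root_p p n = (if p = \<infinity> then 1 else real n powr (1 / real_of_ereal p))"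

definition gridH :: "ereal \<Rightarrow> nat \<Rightarrow> (real ^ 'n) set" where
  "gridH p m = {(1 / pnorm p w) *\<^sub>R w | w. w \<noteq> 0 \<and>
      (\<forall>i. w $ i \<in> {real_of_int k / real m | k. \<bar>k\<bar> \<le> int m})}"

end

theory Submission
  imports Defs
begin

text \<open>Round every coordinate of \<open>x\<close> away from zero onto the grid \<open>(1/m)\<int>\<close>, obtaining \<open>w\<close>.
  Then \<open>|x\<^sub>i| \<le> |w\<^sub>i| \<le> |x\<^sub>i| + 1/m\<close>, so monotonicity of the \<open>p\<close>-norm and Minkowski's inequality
  (against the constant vector \<open>1/m\<close>) give \<open>1 \<le> N \<le> 1 + n\<^bsup>1/p\<^esup>/m\<close> for \<open>N = \<parallel>w\<parallel>\<^sub>p\<close>.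
  The grid point is \<open>y = w/N\<close>: since \<open>|x\<^sub>i - w\<^sub>i| \<le> 1/m\<close>, the product \<open>x\<^sup>Tz\<close> is within
  \<open>\<parallel>z\<parallel>\<^sub>1/m\<close> of \<open>w\<^sup>Tz = N y\<^sup>Tz\<close>, and \<open>N y\<^sup>Tz\<close> lies between \<open>y\<^sup>Tz\<close> and \<open>(1 + n\<^bsup>1/p\<^esup>/m) y\<^sup>Tz\<close>.\<close>

lemma convex_on_powr_nonneg:
  assumes "1 \<le> p"
  shows "convex_on {0..} (\<lambda>x::real. x powr p)"
proof
  fix t x y :: real
  assume t: "0 < t" "t < 1" and xy: "x \<in> {0..}" "y \<in> {0..}"
  consider "0 < x" "0 < y" | "x = 0" | "y = 0" using xy by fastforce
  then show "((1 - t) *\<^sub>R x + t *\<^sub>R y) powr p \<le> (1 - t) * x powr p + t * y powr p"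
  proof cases
    case 1
    then show ?thesis using convex_onD[OF powr_convex[OF assms], of t x y] t by simp
  next
    case 2
    have "(t * y) powr p = t powr p * y powr p" using t xy by (simp add: powr_mult)
    also have "\<dots> \<le> t * y powr p" using powr_le_one_le[of t p] t assms by (intro mult_right_mono) auto
    finally show ?thesis using 2 by simp
  next
    case 3
    have "((1 - t) * x) powr p = (1 - t) powr p * x powr p" using t xy by (simp add: powr_mult)
    also have "\<dots> \<le> (1 - t) * x powr p" using powr_le_one_le[of "1 - t" p] t assms by (intro mult_right_mono) auto
    finally show ?thesis using 3 by simp
  qed
qed simp

text \<open>Convexity of \<open>u\<^sup>r\<close> at \<open>(a + b)/(A + B)\<close>, the convex combination of \<open>a/A\<close> and \<open>b/B\<close>
  with weights \<open>A/(A + B)\<close> and \<open>B/(A + B)\<close>; summed over coordinates this is Minkowski's inequality.\<close>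

lemma powr_add_le_weighted:
  fixes a b A B r :: real
  assumes r: "1 \<le> r" and ab: "0 \<le> a" "0 \<le> b" and AB: "0 < A" "0 < B"
  shows "(a + b) powr r \<le> (A + B) powr (r - 1) * (a powr r / A powr (r - 1) + b powr r / B powr (r - 1))"
proof -
  define t where "t = B / (A + B)"
  have t: "0 \<le> t" "t \<le> 1" "1 - t = A / (A + B)" using AB by (auto simp: t_def field_simps)
  have "(1 - t) * (a / A) = a / (A + B)" using AB by (simp add: t(3))
  moreover have "t * (b / B) = b / (A + B)" using AB by (simp add: t_def)
  ultimately have mix: "(1 - t) *\<^sub>R (a / A) + t *\<^sub>R (b / B) = (a + b) / (A + B)"
    by (simp add: add_divide_distrib)
  have "((a + b) / (A + B)) powr r \<le> (1 - t) * (a / A) powr r + t * (b / B) powr r"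
    using convex_onD[OF convex_on_powr_nonneg[OF r] t(1,2), of "a / A" "b / B"] ab AB mix by simp
  then have "(a + b) powr r / (A + B) powr r
             \<le> A / (A + B) * (a powr r / A powr r) + B / (A + B) * (b powr r / B powr r)"
    unfolding t(3) using AB ab by (simp add: t_def powr_divide)
  then have "(a + b) powr r
             \<le> (A + B) powr r * (A / (A + B) * (a powr r / A powr r) + B / (A + B) * (b powr r / B powr r))"
    using AB by (simp add: pos_divide_le_eq mult.commute)
  also have "\<dots> = (A + B) powr (r - 1) * (a powr r / A powr (r - 1) + b powr r / B powr (r - 1))"
  proof -
    have "A powr r \<noteq> 0" "B powr r \<noteq> 0" "A + B \<noteq> 0" using AB by auto
    then show ?thesis using AB by (simp add: powr_diff divide_simps)
  qed
  finally show ?thesis .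
qed

lemma minkowski_sum_powr:
  fixes a b :: "'i \<Rightarrow> real"
  assumes I: "finite I" and r: "1 \<le> r" and a: "\<forall>i\<in>I. 0 \<le> a i" and b: "\<forall>i\<in>I. 0 \<le> b i"
  shows "(\<Sum>i\<in>I. (a i + b i) powr r) powr (1 / r)
           \<le> (\<Sum>i\<in>I. a i powr r) powr (1 / r) + (\<Sum>i\<in>I. b i powr r) powr (1 / r)"
proof -
  define A where "A = (\<Sum>i\<in>I. a i powr r) powr (1 / r)"
  define B where "B = (\<Sum>i\<in>I. b i powr r) powr (1 / r)"
  have A_pow: "A powr r = (\<Sum>i\<in>I. a i powr r)" and B_pow: "B powr r = (\<Sum>i\<in>I. b i powr r)"
    using r by (simp_all add: A_def B_def powr_powr sum_nonneg)
  consider "A = 0" | "B = 0" | "0 < A" "0 < B" by (force simp: A_def B_def)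
  then show ?thesis
  proof cases
    case 1
    then have "\<forall>i\<in>I. a i = 0" using A_pow I a r by (simp add: sum_nonneg_eq_0_iff)
    then show ?thesis using 1 by (simp add: A_def B_def)
  next
    case 2
    then have "\<forall>i\<in>I. b i = 0" using B_pow I b r by (simp add: sum_nonneg_eq_0_iff)
    then show ?thesis using 2 by (simp add: A_def B_def)
  next
    case 3
    have "(\<Sum>i\<in>I. (a i + b i) powr r)
          \<le> (\<Sum>i\<in>I. (A + B) powr (r - 1) * (a i powr r / A powr (r - 1) + b i powr r / B powr (r - 1)))"
      using a b 3 by (intro sum_mono powr_add_le_weighted[OF r]) auto
    also have "\<dots> = (A + B) powr (r - 1) * (A powr r / A powr (r - 1) + B powr r / B powr (r - 1))"
      by (simp add: A_pow B_pow sum_distrib_left sum_divide_distrib sum.distrib distrib_left)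
    also have "\<dots> = (A + B) powr r"
      using 3 by (simp add: powr_diff)
    finally have "(\<Sum>i\<in>I. (a i + b i) powr r) powr (1 / r) \<le> ((A + B) powr r) powr (1 / r)"
      using r a b by (intro powr_mono2) (auto intro: sum_nonneg)
    also have "\<dots> = A + B" using r 3 by (simp add: powr_powr)
    finally show ?thesis by (simp add: A_def B_def)
  qed
qed

lemma pnorm_zero [simp]: "pnorm p 0 = 0"
  by (simp add: pnorm_def)

lemma pnorm_finite: "pnorm (ereal r) x = (\<Sum>i\<in>UNIV. \<bar>x $ i\<bar> powr r) powr (1 / r)"
  by (simp add: pnorm_def)

lemma pnorm_infinity: "pnorm \<infinity> x = Max (range (\<lambda>i. \<bar>x $ i\<bar>))"
  by (simp add: pnorm_def)

lemma abs_le_pnorm: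
  assumes "0 < p"
  shows "\<bar>x $ i\<bar> \<le> pnorm p x"
proof (cases p)
  case (real r)
  then have "0 < r" using assms by simp
  then have "\<bar>x $ i\<bar> = (\<bar>x $ i\<bar> powr r) powr (1 / r)" by (simp add: powr_powr)
  also have "\<dots> \<le> (\<Sum>j\<in>UNIV. \<bar>x $ j\<bar> powr r) powr (1 / r)"
    using \<open>0 < r\<close> by (intro powr_mono2 member_le_sum) auto
  finally show ?thesis by (simp add: real pnorm_finite)
qed (use assms in \<open>auto simp: pnorm_infinity\<close>)

lemma pnorm_mono:
  assumes "0 < p" and le: "\<forall>i. \<bar>x $ i\<bar> \<le> \<bar>y $ i\<bar>"
  shows "pnorm p x \<le> pnorm p y"
proof (cases p)
  case (real r)
  then have "0 < r" using assms by simp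
  then show ?thesis
    using le by (simp add: real pnorm_finite powr_mono2 sum_mono sum_nonneg)
next
  case PInf
  have "\<bar>x $ i\<bar> \<le> pnorm p y" for i
    using le abs_le_pnorm[OF assms(1), of y i] by (meson order.trans)
  then show ?thesis by (simp add: PInf pnorm_infinity)
qed (use assms in simp)

lemma pnorm_le_add_const:
  fixes x y :: "real ^ 'n"
  assumes p: "1 \<le> p" and c: "0 \<le> c" and le: "\<forall>i. \<bar>y $ i\<bar> \<le> \<bar>x $ i\<bar> + c"
  shows "pnorm p y \<le> pnorm p x + root_p p CARD('n) * c"
proof (cases p)
  case (real r)
  then have r: "1 \<le> r" using p by simp
  have "pnorm p y \<le> (\<Sum>i\<in>UNIV. (\<bar>x $ i\<bar> + c) powr r) powr (1 / r)"
    using r le c by (simp add: real pnorm_finite powr_mono2 sum_mono sum_nonneg)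
  also have "\<dots> \<le> pnorm p x + (\<Sum>i\<in>(UNIV :: 'n set). c powr r) powr (1 / r)"
    unfolding real pnorm_finite
    using minkowski_sum_powr[of "UNIV :: 'n set" r "\<lambda>i. \<bar>x $ i\<bar>" "\<lambda>_. c"] r c by simp
  also have "(\<Sum>i\<in>(UNIV :: 'n set). c powr r) powr (1 / r) = root_p p CARD('n) * c"
    using r c by (simp add: real root_p_def powr_mult powr_powr)
  finally show ?thesis .
next
  case PInf
  have "\<bar>y $ i\<bar> \<le> pnorm p x + c" for i
    using le[rule_format, of i] abs_le_pnorm[of p x i] PInf by simp
  then show ?thesis by (simp add: PInf pnorm_infinity root_p_def)
qed (use p in simp)

definition round_away :: "nat \<Rightarrow> real \<Rightarrow> int" where
  "round_away m u = (if 0 \<le> u then \<lceil>real m * u\<rceil> else - \<lceil>- real m * u\<rceil>)"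

lemma ceiling_scaled_bounds:
  assumes "0 < m"
  shows "s \<le> of_int \<lceil>real m * s\<rceil> / real m" "of_int \<lceil>real m * s\<rceil> / real m < s + 1 / real m"
proof -
  have "real m * s \<le> of_int \<lceil>real m * s\<rceil>" "of_int \<lceil>real m * s\<rceil> < real m * s + 1"
    by linarith+
  then show "s \<le> of_int \<lceil>real m * s\<rceil> / real m" "of_int \<lceil>real m * s\<rceil> / real m < s + 1 / real m"
    using assms by (simp_all add: field_simps)
qed

lemma round_away_between:
  fixes u :: real
  assumes "0 < m"
  defines "v \<equiv> of_int (round_away m u) / real m"
  shows "\<bar>u\<bar> \<le> \<bar>v\<bar>" "\<bar>u - v\<bar> < 1 / real m"
proof -
  have "0 \<le> u \<and> u \<le> v \<and> v < u + 1 / real m \<or> u < 0 \<and> u - 1 / real m < v \<and> v \<le> u"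
  proof (cases "0 \<le> u")
    case True
    then show ?thesis using ceiling_scaled_bounds[OF assms(1), of u] by (simp add: v_def round_away_def)
  next
    case False
    then show ?thesis using ceiling_scaled_bounds[OF assms(1), of "- u"] by (simp add: v_def round_away_def)
  qed
  then show "\<bar>u\<bar> \<le> \<bar>v\<bar>" "\<bar>u - v\<bar> < 1 / real m" by linarith+
qed

lemma abs_round_away_le:
  assumes m: "0 < m" and u: "\<bar>u\<bar> \<le> 1"
  shows "\<bar>round_away m u\<bar> \<le> int m"
proof -
  have "\<bar>of_int (round_away m u) / real m\<bar> < 1 + 1 / real m"
    using round_away_between(2)[OF m, of u] u by linarith
  then have "\<bar>of_int (round_away m u)\<bar> < real m + 1"
    using m by (simp add: field_simps)
  then show ?thesis by linarith
qed

definition grid_coords :: "nat \<Rightarrow> real set" where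
  "grid_coords m = {real_of_int k / real m | k. \<bar>k\<bar> \<le> int m}"

lemma grid_coords_eq_image: "grid_coords m = (\<lambda>k. real_of_int k / real m) ` {- int m..int m}"
  by (auto simp: grid_coords_def abs_le_iff)

lemma finite_grid_coords: "finite (grid_coords m)"
  by (simp add: grid_coords_eq_image)

lemma card_grid_coords_le: "card (grid_coords m) \<le> 2 * m + 1"
proof -
  have "card (grid_coords m) \<le> card {- int m..int m}"
    unfolding grid_coords_eq_image by (rule card_image_le) simp
  then show ?thesis by simp
qed

lemma grid_rounding:
  fixes x :: "real ^ 'n"
  assumes p: "1 \<le> p" and m: "0 < m" and x: "pnorm p x = 1"
  obtains w :: "real ^ 'n" where
    "\<forall>i. w $ i \<in> grid_coords m" "\<forall>i. \<bar>x $ i - w $ i\<bar> \<le> 1 / real m"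
    "1 \<le> pnorm p w" "pnorm p w \<le> 1 + root_p p CARD('n) / real m"
proof -
  define w :: "real ^ 'n" where "w = (\<chi> i. of_int (round_away m (x $ i)) / real m)"
  have p0: "0 < p" using p by (cases p) auto
  have away: "\<bar>x $ i\<bar> \<le> \<bar>w $ i\<bar>" and close: "\<bar>x $ i - w $ i\<bar> < 1 / real m" for i
    using round_away_between[OF m] by (simp_all add: w_def)
  show ?thesis
  proof (rule that)
    have "\<bar>round_away m (x $ i)\<bar> \<le> int m" for i
      using abs_round_away_le[OF m] abs_le_pnorm[OF p0, of x i] x by simp
    then show "\<forall>i. w $ i \<in> grid_coords m"
      by (auto simp: w_def grid_coords_def)
    show "\<forall>i. \<bar>x $ i - w $ i\<bar> \<le> 1 / real m"
      using close by (simp add: less_imp_le)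
    show "1 \<le> pnorm p w"
      using pnorm_mono[OF p0, of x w] away x by simp
    have "\<bar>w $ i\<bar> \<le> \<bar>x $ i\<bar> + 1 / real m" for i
      using close[of i] by linarith
    then show "pnorm p w \<le> 1 + root_p p CARD('n) / real m"
      using pnorm_le_add_const[OF p, of "1 / real m" w x] x by simp
  qed
qed

lemma vecs_with_coords_in:
  fixes G :: "'a set"
  assumes "finite G"
  shows "finite {v :: 'a ^ 'n. \<forall>i. v $ i \<in> G}" "card {v :: 'a ^ 'n. \<forall>i. v $ i \<in> G} = card G ^ CARD('n)"
proof -
  have bij: "bij_betw vec_nth {v :: 'a ^ 'n. \<forall>i. v $ i \<in> G} (PiE UNIV (\<lambda>_. G))"
    by (intro bij_betwI[of _ _ _ vec_lambda]) (auto simp: vec_eq_iff)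
  show "finite {v :: 'a ^ 'n. \<forall>i. v $ i \<in> G}"
    using bij_betw_finite[OF bij] assms by (simp add: finite_PiE)
  show "card {v :: 'a ^ 'n. \<forall>i. v $ i \<in> G} = card G ^ CARD('n)"
    using bij_betw_same_card[OF bij] assms by (simp add: card_PiE)
qed

lemma gridH_subset: "gridH p m \<subseteq> (\<lambda>w. (1 / pnorm p w) *\<^sub>R w) ` {w. \<forall>i. w $ i \<in> grid_coords m}"
  unfolding gridH_def grid_coords_def by blast

lemma finite_gridH: "finite (gridH p m)"
  by (rule finite_subset[OF gridH_subset finite_imageI[OF vecs_with_coords_in(1)[OF finite_grid_coords]]])

lemma card_gridH_le: "card (gridH p m :: (real ^ 'n) set) \<le> (2 * m + 1) ^ CARD('n)"
proof -
  let ?W = "{w :: real ^ 'n. \<forall>i. w $ i \<in> grid_coords m}"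
  have "card (gridH p m :: (real ^ 'n) set) \<le> card ((\<lambda>w. (1 / pnorm p w) *\<^sub>R w) ` ?W)"
    by (intro card_mono finite_imageI vecs_with_coords_in(1)[OF finite_grid_coords] gridH_subset)
  also have "\<dots> \<le> card ?W"
    by (rule card_image_le[OF vecs_with_coords_in(1)[OF finite_grid_coords]])
  also have "\<dots> = card (grid_coords m) ^ CARD('n)"
    by (rule vecs_with_coords_in(2)[OF finite_grid_coords])
  also have "\<dots> \<le> (2 * m + 1) ^ CARD('n)"
    by (rule power_mono[OF card_grid_coords_le]) simp
  finally show ?thesis .
qed

lemma abs_inner_le_norm1:
  fixes v z :: "real ^ 'n"
  assumes "\<forall>i. \<bar>v $ i\<bar> \<le> d"
  shows "\<bar>v \<bullet> z\<bar> \<le> d * norm1 z"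
proof -
  have "\<bar>v \<bullet> z\<bar> \<le> (\<Sum>i\<in>UNIV. \<bar>v $ i\<bar> * \<bar>z $ i\<bar>)"
    unfolding inner_vec_def inner_real_def abs_mult[symmetric] by (rule sum_abs)
  also have "\<dots> \<le> (\<Sum>i\<in>UNIV. d * \<bar>z $ i\<bar>)"
    using assms by (intro sum_mono mult_right_mono) auto
  finally show ?thesis by (simp add: norm1_def sum_distrib_left)
qed

lemma two_sided_bounds_of_scaling:
  fixes a t N C e :: real
  assumes N: "1 \<le> N" "N \<le> C" and close: "\<bar>a - N * t\<bar> \<le> e"
  shows "(0 \<le> t \<longrightarrow> t - e \<le> a \<and> a \<le> C * t + e) \<and> (t < 0 \<longrightarrow> C * t - e \<le> a \<and> a \<le> t + e)"
proof (intro conjI impI)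
  assume "0 \<le> t"
  then have "t \<le> N * t" "N * t \<le> C * t" using mult_right_mono[of 1 N t] mult_right_mono[of N C t] N by simp_all
  then show "t - e \<le> a" "a \<le> C * t + e" using close by linarith+
next
  assume "t < 0"
  then have "N * t \<le> t" "C * t \<le> N * t" using mult_right_mono_neg[of 1 N t] mult_right_mono_neg[of N C t] N by simp_all
  then show "C * t - e \<le> a" "a \<le> t + e" using close by linarith+
qed

lemma gridH_approximates_unit_vector:
  fixes p :: ereal and m :: nat and x :: "real ^ 'n"
  assumes p: "1 \<le> p" and m: "0 < m" and x: "pnorm p x = 1"
  shows "\<exists>y \<in> gridH p m. \<forall>z :: real ^ 'n.
           (y \<bullet> z \<ge> 0 \<longrightarrow>
              y \<bullet> z - norm1 z / real m \<le> x \<bullet> z \<and>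
              x \<bullet> z \<le> (1 + root_p p CARD('n) / real m) * (y \<bullet> z) + norm1 z / real m) \<and>
           (y \<bullet> z < 0 \<longrightarrow>
              (1 + root_p p CARD('n) / real m) * (y \<bullet> z) - norm1 z / real m \<le> x \<bullet> z \<and>
              x \<bullet> z \<le> y \<bullet> z + norm1 z / real m)"
proof -
  obtain w :: "real ^ 'n" where
    grid: "\<forall>i. w $ i \<in> grid_coords m" and
    close: "\<forall>i. \<bar>x $ i - w $ i\<bar> \<le> 1 / real m" and
    N: "1 \<le> pnorm p w" "pnorm p w \<le> 1 + root_p p CARD('n) / real m"
    by (rule grid_rounding[OF p m x])
  define y where "y = (1 / pnorm p w) *\<^sub>R w"
  have "w \<noteq> 0" using N by auto
  then have "y \<in> gridH p m" using grid by (auto simp: y_def gridH_def grid_coords_def)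
  moreover have "\<bar>x \<bullet> z - pnorm p w * (y \<bullet> z)\<bar> \<le> norm1 z / real m" for z
    using abs_inner_le_norm1[of "x - w" "1 / real m" z] close N by (simp add: y_def inner_diff_left)
  ultimately show ?thesis using two_sided_bounds_of_scaling[OF N] by blast
qed

theorem lemma4p10:
  fixes p :: ereal and m :: nat
  assumes "1 \<le> p" and "m \<ge> 1"
  shows "finite (gridH p m :: (real ^ 'n) set)
       \<and> card (gridH p m :: (real ^ 'n) set) \<le> (2 * m + 1) ^ CARD('n)
       \<and> (\<forall>x :: real ^ 'n. pnorm p x = 1 \<longrightarrow>
            (\<exists>y \<in> gridH p m. \<forall>z :: real ^ 'n.
               (y \<bullet> z \<ge> 0 \<longrightarrow>
                  y \<bullet> z - norm1 z / real m \<le> x \<bullet> z \<and>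
                  x \<bullet> z \<le> (1 + root_p p CARD('n) / real m) * (y \<bullet> z) + norm1 z / real m) \<and>
               (y \<bullet> z < 0 \<longrightarrow>
                  (1 + root_p p CARD('n) / real m) * (y \<bullet> z) - norm1 z / real m \<le> x \<bullet> z \<and>
                  x \<bullet> z \<le> y \<bullet> z + norm1 z / real m)))"
proof -
  have "0 < m" using assms(2) by simp
  then show ?thesis
    using finite_gridH card_gridH_le gridH_approximates_unit_vector[OF assms(1)] by blast
qed

end
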